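(* Let $\xi=e_{12}-e_{14}$ and $U=\{x\in\mathbb R^4:x^2+x^4>0\}$. On $U$ use the coordinates $\tilde x^1=x^2+x^4$, $\tilde x^2=-x^1/(x^2+x^4)$, $\tilde x^3=x^3$, $\tilde x^4=\tfrac12(x^1)^2+x^2(x^2+x^4)$ (a diffeomorphism of $U$ onto $(0,\infty)\times\mathbb R^3$). Then a smooth covector field $A$ on $U$ satisfies $L_\xi A=0$ if and only if there are smooth functions $C_1,C_2,C_3,B$ of $(\tilde x^1,\tilde x^3,\tilde x^4)\in(0,\infty)\times\mathbb R^2$ such that $$A_1=C_2\tilde x^2+C_3,\quad A_2=\tfrac12C_2(\tilde x^2)^2+C_3\tilde x^2+C_1,\quad A_3=B,\quad A_4=A_2+C_2 .$$
   Context: Work in $\mathbb R^4$ with Galilean (Cartesian) coordinates $x^1,x^2,x^3,x^4$ of Minkowski space (metric $\mathrm{diag}(-1,-1,-1,1)$). A potential on an open set $U\subseteq\mathbb R^4$ is a smooth covector field $A=A_i\,dx^i$; its components $A_i$ are always those with respect to the coordinates $x^i$, even when written as functions of other variables. For a vector field $\xi=\xi^k\partial_k$ the Lie derivative is $(L_\xi A)_i=\xi^k\partial_kA_i+A_k\partial_i\xi^k$. The vector fields used are, by components $(\xi^1,\xi^2,\xi^3,\xi^4)$: $e_1=(1,0,0,0)$, $e_2=(0,1,0,0)$, $e_3=(0,0,1,0)$, $e_4=(0,0,0,1)$, $e_{12}=(-x^2,x^1,0,0)$, $e_{13}=(x^3,0,-x^1,0)$, $e_{23}=(0,-x^3,x^2,0)$,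 $e_{14}=(x^4,0,0,x^1)$, $e_{24}=(0,x^4,0,x^2)$, $e_{34}=(0,0,x^4,x^3)$. A potential admits a family of vector fields if $L_\xi A=0$ for each $\xi$ in it (equivalently for every element of their linear span). "Functions" are smooth real functions; $\mathrm{ch}=\cosh$, $\mathrm{sh}=\sinh$. *)

theory Defs
  imports "HOL-Analysis.Analysis"
begin

text \<open>Points of R^4 are vectors of type real^4 with components x$1,...,x$4
  (the numeral type 4 has exactly the four distinct elements 1,2,3,4).\<close>

definition pd :: "'n::finite \<Rightarrow> (real^'n \<Rightarrow> real) \<Rightarrow> real^'n \<Rightarrow> real" where
  "pd k f x = frechet_derivative f (at x) (axis k 1)"

text \<open>Smooth (C-infinity) real functions on an open set S: differentiable on S,
  and all partial derivatives are again smooth on S (coinductively, i.e. all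
  iterated partial derivatives exist).\<close>
coinductive smooth_on :: "(real^'n::finite) set \<Rightarrow> (real^'n \<Rightarrow> real) \<Rightarrow> bool" where
  "f differentiable_on S \<Longrightarrow> (\<forall>k. smooth_on S (pd k f)) \<Longrightarrow> smooth_on S f"

definition lie_deriv :: "(4 \<Rightarrow> real^4 \<Rightarrow> real) \<Rightarrow> (4 \<Rightarrow> real^4 \<Rightarrow> real) \<Rightarrow> 4 \<Rightarrow> real^4 \<Rightarrow> real" where
  "lie_deriv \<xi> A i x = (\<Sum>k\<in>UNIV. \<xi> k x * pd k (A i) x + A k x * pd i (\<xi> k) x)"

definition e12 :: "4 \<Rightarrow> real^4 \<Rightarrow> real" where
  "e12 k x = (if k = 1 then - x$2 else if k = 2 then x$1 else 0)"

definition e14 :: "4 \<Rightarrow> real^4 \<Rightarrow> real" where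
  "e14 k x = (if k = 1 then x$4 else if k = 4 then x$1 else 0)"

end

theory Submission
  imports Defs
begin

text \<open>
  Write \<open>y\<^sub>1, ..., y\<^sub>4\<close> for the coordinates \<open>x\<^sup>~\<^sup>1, ..., x\<^sup>~\<^sup>4\<close>. The field
  \<open>\<xi> = e\<^sub>1\<^sub>2 - e\<^sub>1\<^sub>4\<close> has the three independent invariants \<open>y\<^sub>1, y\<^sub>3, y\<^sub>4\<close>,
  and \<open>y\<^sub>2\<close> is a parameter along its integral curves. Since \<open>\<xi>\<close> is linear, along an
  integral curve the equation \<open>L\<^sub>\<xi> A = 0\<close> becomes the constant-coefficient system
  \<open>A\<^sub>1' = A\<^sub>4 - A\<^sub>2\<close>, \<open>A\<^sub>2' = A\<^sub>1\<close>, \<open>A\<^sub>3' = 0\<close>, \<open>A\<^sub>4' = A\<^sub>1\<close> in \<open>y\<^sub>2\<close>, whose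
  solutions are exactly the stated polynomials in \<open>y\<^sub>2\<close> with coefficients constant on each
  orbit. The coefficients are the values of \<open>A\<close> at \<open>y\<^sub>2 = 0\<close>, i.e. along a smooth
  section of the orbits, hence smooth functions of the invariants.
\<close>

lemma has_derivative_vecI:
  fixes f :: "'a::real_normed_vector \<Rightarrow> real^'m"
  assumes "\<And>j. ((\<lambda>x. f x $ j) has_derivative (\<lambda>h. f' h $ j)) (at a within S)"
  shows "(f has_derivative f') (at a within S)"
proof (rule iffD2[OF has_derivative_componentwise_within], rule ballI)
  fix i :: "real^'m" assume "i \<in> Basis"
  then obtain j where "i = axis j 1" by (auto simp: Basis_vec_def)
  then show "((\<lambda>x. f x \<bullet> i) has_derivative (\<lambda>x. f' x \<bullet> i)) (at a within S)"
    using assms by (simp add: inner_axis)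
qed

lemma differentiable_vecI:
  fixes f :: "'a::real_normed_vector \<Rightarrow> real^'m"
  assumes "\<And>j. (\<lambda>x. f x $ j) differentiable (at a)"
  shows "f differentiable (at a)"
proof -
  define f' where "f' h = (\<chi> j. frechet_derivative (\<lambda>x. f x $ j) (at a) h)" for h
  have "(f has_derivative f') (at a)"
    unfolding f'_def by (intro has_derivative_vecI) (use assms frechet_derivative_works in auto)
  then show ?thesis by (auto simp: differentiable_def)
qed

lemma differentiable_on_cong:
  assumes "\<And>y. y \<in> S \<Longrightarrow> h y = f y" and "f differentiable_on S"
  shows "h differentiable_on S"
  using assms unfolding differentiable_on_def
  by (metis differentiable_transform_within zero_less_one)

lemma pd_eqI: "(f has_derivative f') (at x) \<Longrightarrow> pd k f x = f' (axis k 1)"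
  by (simp add: pd_def frechet_derivative_at[symmetric])

lemma pd_cong_open:
  assumes "open S" "x \<in> S" "\<And>y. y \<in> S \<Longrightarrow> h y = f y" "f differentiable (at x)"
  shows "pd k h x = pd k f x"
proof -
  have "(h has_derivative frechet_derivative f (at x)) (at x)"
    using assms frechet_derivative_works has_derivative_transform_within_open by metis
  from pd_eqI[OF this] show ?thesis by (simp add: pd_def)
qed

lemma frechet_derivative_eq_sum_pd:
  fixes f :: "real^'n \<Rightarrow> real"
  assumes "f differentiable (at x)"
  shows "frechet_derivative f (at x) v = (\<Sum>k\<in>UNIV. v$k * pd k f x)"
proof -
  have "linear (frechet_derivative f (at x))"
    using assms frechet_derivative_works has_derivative_linear by blast
  then have "frechet_derivative f (at x) (\<Sum>k\<in>UNIV. v$k *\<^sub>R axis k 1)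
      = (\<Sum>k\<in>UNIV. v$k * frechet_derivative f (at x) (axis k 1))"
    by (simp add: linear_sum linear_scale)
  then show ?thesis by (simp add: pd_def basis_expansion flip: scalar_mult_eq_scaleR)
qed

lemma pd_add:
  assumes "f differentiable (at x)" "g differentiable (at x)"
  shows "pd k (\<lambda>y. f y + g y) x = pd k f x + pd k g x"
  using pd_eqI[OF has_derivative_add[OF assms[unfolded frechet_derivative_works]]]
  by (simp add: pd_def)

lemma pd_mult:
  assumes "f differentiable (at x)" "g differentiable (at x)"
  shows "pd k (\<lambda>y. f y * g y) x = f x * pd k g x + pd k f x * g x"
  using pd_eqI[OF has_derivative_mult[OF assms[unfolded frechet_derivative_works]]]
  by (simp add: pd_def)

lemma pd_compose:
  fixes g :: "real^'n \<Rightarrow> real^'m" and f :: "real^'m \<Rightarrow> real"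
  assumes g: "g differentiable (at y)" and f: "f differentiable (at (g y))"
  shows "pd k (\<lambda>y. f (g y)) y = (\<Sum>j\<in>UNIV. pd k (\<lambda>y. g y $ j) y * pd j f (g y))"
proof -
  let ?G = "frechet_derivative g (at y)"
  have dg: "(g has_derivative ?G) (at y)" using g frechet_derivative_works by blast
  have "((\<lambda>y. g y $ j) has_derivative (\<lambda>h. ?G h $ j)) (at y)" for j
    using bounded_linear.has_derivative[OF bounded_linear_vec_nth dg] .
  then have "pd k (\<lambda>y. g y $ j) y = ?G (axis k 1) $ j" for j by (rule pd_eqI)
  moreover have "pd k (\<lambda>y. f (g y)) y = frechet_derivative f (at (g y)) (?G (axis k 1))"
    using has_derivative_compose[OF dg f[unfolded frechet_derivative_works]] by (rule pd_eqI)
  ultimately show ?thesis by (simp add: frechet_derivative_eq_sum_pd[OF f])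
qed

lemma smooth_on_differentiable_on: "smooth_on S f \<Longrightarrow> f differentiable_on S"
  by (erule smooth_on.cases) simp

lemma smooth_on_pd: "smooth_on S f \<Longrightarrow> smooth_on S (pd k f)"
  by (erule smooth_on.cases) simp

lemma smooth_on_differentiable_at: "smooth_on S f \<Longrightarrow> open S \<Longrightarrow> x \<in> S \<Longrightarrow> f differentiable (at x)"
  using smooth_on_differentiable_on differentiable_on_eq_differentiable_at by blast

lemma pd_closed_imp_smooth_on:
  assumes "P f" and "\<And>g. P g \<Longrightarrow> g differentiable_on S \<and> (\<forall>k. P (pd k g))"
  shows "smooth_on S f"
  using assms(1) by (coinduction arbitrary: f rule: smooth_on.coinduct) (use assms(2) in blast)

lemma pd_const [simp]: "pd k (\<lambda>x. c) = (\<lambda>x. 0)"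
  using pd_eqI[OF has_derivative_const] by auto

lemma pd_component: "pd k (\<lambda>y. y $ j) = (\<lambda>y. if k = j then 1 else 0)"
  by (rule ext, subst pd_eqI[OF bounded_linear_imp_has_derivative[OF bounded_linear_vec_nth]])
    (simp add: axis_def)

lemma smooth_on_const: "smooth_on S (\<lambda>x. c)"
  by (rule pd_closed_imp_smooth_on[where P="\<lambda>g. \<exists>c. g = (\<lambda>x. c)"]) auto

lemma smooth_on_component: "smooth_on S (\<lambda>y. y $ j)"
proof (rule pd_closed_imp_smooth_on[where P="\<lambda>g. (\<exists>c. g = (\<lambda>x. c)) \<or> (\<exists>j. g = (\<lambda>y. y $ j))"])
  fix g :: "real^'a \<Rightarrow> real"
  assume "(\<exists>c. g = (\<lambda>x. c)) \<or> (\<exists>j. g = (\<lambda>y. y $ j))"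
  then show "g differentiable_on S \<and> (\<forall>k. (\<exists>c. pd k g = (\<lambda>x. c)) \<or> (\<exists>j. pd k g = (\<lambda>y. y $ j)))"
    by (auto simp: pd_component bounded_linear_imp_differentiable_on[OF bounded_linear_vec_nth])
qed blast

text \<open>By the chain rule this algebra is closed under partial derivatives, so all its
  members are smooth.\<close>
inductive_set comp_algebra ::
  "(real^'n::finite) set \<Rightarrow> (real^'m::finite) set \<Rightarrow> (real^'n \<Rightarrow> real^'m) \<Rightarrow> (real^'n \<Rightarrow> real) set"
  for S U g where
  smooth: "smooth_on S h \<Longrightarrow> h \<in> comp_algebra S U g"
| compose: "smooth_on U f \<Longrightarrow> (\<lambda>y. f (g y)) \<in> comp_algebra S U g"
| add: "h1 \<in> comp_algebra S U g \<Longrightarrow> h2 \<in> comp_algebra S U g \<Longrightarrow> (\<lambda>y. h1 y + h2 y) \<in> comp_algebra S U g"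
| mult: "h1 \<in> comp_algebra S U g \<Longrightarrow> h2 \<in> comp_algebra S U g \<Longrightarrow> (\<lambda>y. h1 y * h2 y) \<in> comp_algebra S U g"
| cong: "h1 \<in> comp_algebra S U g \<Longrightarrow> (\<And>y. y \<in> S \<Longrightarrow> h y = h1 y) \<Longrightarrow> h \<in> comp_algebra S U g"

lemma comp_algebra_sum:
  "finite J \<Longrightarrow> (\<And>j. j \<in> J \<Longrightarrow> F j \<in> comp_algebra S U g) \<Longrightarrow> (\<lambda>y. \<Sum>j\<in>J. F j y) \<in> comp_algebra S U g"
  by (induction J rule: finite_induct) (auto intro: comp_algebra.intros smooth_on_const)

lemma comp_algebra_pd_closed:
  assumes S: "open S" and U: "open U" and gU: "\<And>y. y \<in> S \<Longrightarrow> g y \<in> U"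
    and g: "\<And>j. smooth_on S (\<lambda>y. g y $ j)"
    and "h \<in> comp_algebra S U g"
  shows "(\<forall>y\<in>S. h differentiable (at y)) \<and> (\<forall>k. pd k h \<in> comp_algebra S U g)"
  using assms(5)
proof (induction rule: comp_algebra.induct)
  case (smooth h)
  then show ?case
    by (auto simp: smooth_on_pd comp_algebra.smooth
        dest!: smooth_on_differentiable_on simp flip: differentiable_on_eq_differentiable_at[OF S])
next
  case (compose f)
  have f: "f differentiable (at (g y))" if "y \<in> S" for y
    using smooth_on_differentiable_on[OF compose] gU[OF that] U differentiable_on_eq_differentiable_at
    by blast
  have "g differentiable (at y)" if "y \<in> S" for y
    using g smooth_on_differentiable_on differentiable_on_eq_differentiable_at[OF S] that
    by (metis differentiable_vecI)
  then have "(\<lambda>y. f (g y)) differentiable (at y)"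
    and chain: "pd k (\<lambda>y. f (g y)) y = (\<Sum>j\<in>UNIV. pd k (\<lambda>y. g y $ j) y * pd j f (g y))"
    if "y \<in> S" for y k
    using that f differentiable_chain_at[of g y f] pd_compose[of g y f] by (auto simp: o_def)
  moreover have "pd k (\<lambda>y. f (g y)) \<in> comp_algebra S U g" for k
  proof (rule comp_algebra.cong[OF _ chain])
    show "(\<lambda>y. \<Sum>j\<in>UNIV. pd k (\<lambda>y. g y $ j) y * pd j f (g y)) \<in> comp_algebra S U g"
      using compose g by (intro comp_algebra_sum comp_algebra.mult comp_algebra.smooth
          comp_algebra.compose smooth_on_pd) auto
  qed
  ultimately show ?case by blast
next
  case (add h1 h2)
  have "pd k (\<lambda>y. h1 y + h2 y) \<in> comp_algebra S U g" for k
    by (rule comp_algebra.cong[of "\<lambda>y. pd k h1 y + pd k h2 y"])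
      (use add in \<open>auto intro: comp_algebra.add simp: pd_add\<close>)
  with add show ?case by auto
next
  case (mult h1 h2)
  have "pd k (\<lambda>y. h1 y * h2 y) \<in> comp_algebra S U g" for k
    by (rule comp_algebra.cong[of "\<lambda>y. h1 y * pd k h2 y + pd k h1 y * h2 y"])
      (use mult in \<open>auto intro!: comp_algebra.add comp_algebra.mult simp: pd_mult\<close>)
  with mult show ?case by auto
next
  case (cong h1 h)
  have "h differentiable (at y)" if "y \<in> S" for y
  proof -
    have "h1 differentiable (at y)" using cong.IH that by blast
    then obtain D where "(h1 has_derivative D) (at y)" unfolding differentiable_def ..
    then have "(h has_derivative D) (at y)"
      by (rule has_derivative_transform_within_open[OF _ S that]) (simp add: cong.hyps(2))
    then show ?thesis by (auto simp: differentiable_def)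
  qed
  moreover have "pd k h \<in> comp_algebra S U g" for k
  proof (rule comp_algebra.cong[of "pd k h1"])
    show "pd k h1 \<in> comp_algebra S U g" using cong.IH by blast
    show "pd k h y = pd k h1 y" if "y \<in> S" for y
      using that cong.hyps(2) cong.IH by (intro pd_cong_open[OF S]) auto
  qed
  ultimately show ?case by blast
qed

lemma comp_algebra_smooth_on:
  assumes "open S" "open U" "\<And>y. y \<in> S \<Longrightarrow> g y \<in> U" "\<And>j. smooth_on S (\<lambda>y. g y $ j)"
    and "h \<in> comp_algebra S U g"
  shows "smooth_on S h"
proof (rule pd_closed_imp_smooth_on[where P="\<lambda>h. h \<in> comp_algebra S U g"])
  fix h assume "h \<in> comp_algebra S U g"
  with comp_algebra_pd_closed[OF assms(1,2)] assms(3,4)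
  show "h differentiable_on S \<and> (\<forall>k. pd k h \<in> comp_algebra S U g)"
    by (meson differentiable_at_imp_differentiable_on)
qed (fact assms(5))

lemma smooth_on_compose:
  assumes "open S" "open U" "\<And>y. y \<in> S \<Longrightarrow> g y \<in> U" "\<And>j. smooth_on S (\<lambda>y. g y $ j)"
    and "smooth_on U f"
  shows "smooth_on S (\<lambda>y. f (g y))"
  using assms(1-4) comp_algebra.compose[OF assms(5)] by (rule comp_algebra_smooth_on)

lemma smooth_on_add:
  "open S \<Longrightarrow> smooth_on S f \<Longrightarrow> smooth_on S h \<Longrightarrow> smooth_on S (\<lambda>y. f y + h y)"
  by (rule comp_algebra_smooth_on[where U=UNIV and g="\<lambda>y. y"])
    (auto intro: comp_algebra.add comp_algebra.smooth smooth_on_component)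

lemma smooth_on_mult:
  "open S \<Longrightarrow> smooth_on S f \<Longrightarrow> smooth_on S h \<Longrightarrow> smooth_on S (\<lambda>y. f y * h y)"
  by (rule comp_algebra_smooth_on[where U=UNIV and g="\<lambda>y. y"])
    (auto intro: comp_algebra.mult comp_algebra.smooth smooth_on_component)

lemma smooth_on_diff:
  assumes "open S" "smooth_on S f" "smooth_on S h"
  shows "smooth_on S (\<lambda>y. f y - h y)"
  using smooth_on_add[OF assms(1,2) smooth_on_mult[OF assms(1) smooth_on_const assms(3)], of "- 1"]
  by simp

lemma has_derivative_inverse_power_component:
  assumes "y $ j \<noteq> 0"
  shows "((\<lambda>y. c * inverse (y $ j) ^ n) has_derivative
    (\<lambda>v. v $ j * (- c * real n * inverse (y $ j) ^ Suc n))) (at y)"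
proof (rule DERIV_compose_FDERIV[where f="\<lambda>t. c * inverse t ^ n"])
  have "((\<lambda>t. c * inverse t ^ n) has_real_derivative
      c * (real n * inverse (y $ j) ^ (n - 1) * - (inverse (y $ j) ^ 2))) (at (y $ j))"
    using DERIV_cmult[OF DERIV_chain2[OF DERIV_pow DERIV_inverse[OF assms]]] by (simp add: numeral_2_eq_2)
  moreover have "c * (real n * inverse (y $ j) ^ (n - 1) * - (inverse (y $ j) ^ 2))
      = - c * real n * inverse (y $ j) ^ Suc n"
    by (cases n) (simp_all add: algebra_simps power2_eq_square)
  ultimately show "((\<lambda>t. c * inverse t ^ n) has_real_derivative - c * real n * inverse (y $ j) ^ Suc n) (at (y $ j))"
    by (rule DERIV_cong)
qed (rule bounded_linear_imp_has_derivative[OF bounded_linear_vec_nth])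

lemma smooth_on_inverse_component: "smooth_on {y. 0 < y $ j} (\<lambda>y. inverse (y $ j))"
proof (rule pd_closed_imp_smooth_on[where P="\<lambda>g. \<exists>c n. \<forall>y\<in>{y. 0 < y $ j}. g y = c * inverse (y $ j) ^ n"])
  let ?S = "{y::real^'a. 0 < y $ j}"
  have S: "open ?S" using open_halfspace_component_gt_cart[of 0 j] by simp
  fix g assume "\<exists>c n. \<forall>y\<in>?S. g y = c * inverse (y $ j) ^ n"
  then obtain c n where g: "\<And>y. y \<in> ?S \<Longrightarrow> g y = c * inverse (y $ j) ^ n" by blast
  note D = has_derivative_inverse_power_component[of y j c n for y]
  have diff: "(\<lambda>y. c * inverse (y $ j) ^ n) differentiable (at y)" if "y \<in> ?S" for y
    using D[of y] that unfolding differentiable_def by fastforce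
  then have "g differentiable_on ?S"
    by (intro differentiable_on_cong[OF g] differentiable_at_imp_differentiable_on)
  moreover have "pd k g y = (if k = j then - c * real n else 0) * inverse (y $ j) ^ Suc n"
    if "y \<in> ?S" for y k
  proof -
    have "pd k g y = pd k (\<lambda>y. c * inverse (y $ j) ^ n) y"
      using S that g diff[OF that] by (rule pd_cong_open)
    also have "\<dots> = (if k = j then - c * real n else 0) * inverse (y $ j) ^ Suc n"
      using that pd_eqI[OF D[of y]] by (simp add: axis_def)
    finally show ?thesis .
  qed
  ultimately show "g differentiable_on ?S \<and> (\<forall>k. \<exists>c n. \<forall>y\<in>?S. pd k g y = c * inverse (y $ j) ^ n)"
    by blast
qed (intro exI[of _ 1], simp)

section \<open>The integral curves of \<open>\<xi>\<close>\<close>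

definition xi :: "4 \<Rightarrow> real^4 \<Rightarrow> real" where
  "xi k x = e12 k x - e14 k x"

lemma xi_simps [simp]: "xi 1 x = - x$2 - x$4" "xi 2 x = x$1" "xi 3 x = 0" "xi 4 x = - x$1"
  by (simp_all add: xi_def e12_def e14_def)

lemma has_derivative_xi: "(xi k has_derivative xi k) (at x)"
proof -
  have "xi k = (\<lambda>x. - x$2 - x$4) \<or> xi k = (\<lambda>x. x$1) \<or> xi k = (\<lambda>x. 0) \<or> xi k = (\<lambda>x. - x$1)"
    using exhaust_4[of k] by (auto simp: fun_eq_iff)
  then have "bounded_linear (xi k)"
    by (auto intro!: bounded_linear_intros bounded_linear_minus bounded_linear_vec_nth)
  then show ?thesis by (rule bounded_linear_imp_has_derivative)
qed

definition deriv_along_xi :: "(real^4 \<Rightarrow> real) \<Rightarrow> real^4 \<Rightarrow> real" where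
  "deriv_along_xi f x = (\<Sum>k\<in>UNIV. xi k x * pd k f x)"

lemma lie_deriv_xi:
  "lie_deriv xi A 1 x = deriv_along_xi (A 1) x + A 2 x - A 4 x"
  "lie_deriv xi A 2 x = deriv_along_xi (A 2) x - A 1 x"
  "lie_deriv xi A 3 x = deriv_along_xi (A 3) x"
  "lie_deriv xi A 4 x = deriv_along_xi (A 4) x - A 1 x"
  by (simp_all add: lie_deriv_def deriv_along_xi_def sum.distrib pd_eqI[OF has_derivative_xi]
      sum_4 axis_def)

text \<open>The point with coordinates \<open>y = (p$1, s, p$2, p$3)\<close>: \<open>p\<close> collects the invariants
  and \<open>s = y\<^sub>2\<close> is the parameter along the integral curve.\<close>
definition xi_flow :: "real^3 \<Rightarrow> real \<Rightarrow> real^4" where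
  "xi_flow p s = vector [- p$1 * s, (p$3 - p$1^2 * s^2 / 2) / p$1, p$2,
                         p$1 - (p$3 - p$1^2 * s^2 / 2) / p$1]"

definition xi_invariants :: "real^4 \<Rightarrow> real^3" where
  "xi_invariants x = vector [x$2 + x$4, x$3, (x$1)^2 / 2 + x$2 * (x$2 + x$4)]"

definition xi_param :: "real^4 \<Rightarrow> real" where
  "xi_param x = - x$1 / (x$2 + x$4)"

lemma xi_invariants_1 [simp]: "xi_invariants x $ 1 = x$2 + x$4"
  by (simp add: xi_invariants_def)

lemma xi_flow_components [simp]:
  "xi_flow p s $ 1 = - p$1 * s"
  "xi_flow p s $ 2 = (p$3 - p$1^2 * s^2 / 2) / p$1"
  "xi_flow p s $ 3 = p$2"
  "xi_flow p s $ 4 = p$1 - (p$3 - p$1^2 * s^2 / 2) / p$1"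
  by (simp_all add: xi_flow_def vector_def)

lemma xi_flow_xi_invariants:
  assumes "0 < x$2 + x$4"
  shows "xi_flow (xi_invariants x) (xi_param x) = x"
proof -
  define t where "t = x$2 + x$4"
  have "t \<noteq> 0" "x$4 = t - x$2" using assms by (simp_all add: t_def)
  then show ?thesis
    by (simp add: vec_eq_iff forall_4 xi_invariants_def xi_param_def field_simps power2_eq_square
        flip: t_def)
qed

lemma xi_invariants_xi_flow:
  assumes "0 < p$1"
  shows "xi_invariants (xi_flow p s) = p" "xi_param (xi_flow p s) = s"
    "0 < xi_flow p s $ 2 + xi_flow p s $ 4"
  using assms
  by (simp_all add: vec_eq_iff forall_3 xi_invariants_def xi_param_def field_simps power2_eq_square)

lemma has_vector_derivative_xi_flow:
  assumes "p$1 \<noteq> 0"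
  shows "(xi_flow p has_vector_derivative (\<chi> k. xi k (xi_flow p s))) (at s)"
  unfolding has_vector_derivative_def
proof (rule has_derivative_vecI)
  fix j :: 4
  have "((\<lambda>s. xi_flow p s $ j) has_real_derivative xi j (xi_flow p s)) (at s)"
    using exhaust_4[of j] assms
    by (auto intro!: derivative_eq_intros simp: field_simps power2_eq_square)
  then show "((\<lambda>s. xi_flow p s $ j) has_derivative (\<lambda>h. (h *\<^sub>R (\<chi> k. xi k (xi_flow p s))) $ j)) (at s)"
    by (simp add: has_field_derivative_def mult_commute_abs)
qed

lemma has_real_derivative_along_xi_flow:
  assumes "p$1 \<noteq> 0" and f: "f differentiable (at (xi_flow p s))"
  shows "((\<lambda>s. f (xi_flow p s)) has_real_derivative deriv_along_xi f (xi_flow p s)) (at s)"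
proof -
  let ?Df = "frechet_derivative f (at (xi_flow p s))"
  have "((\<lambda>s. f (xi_flow p s)) has_derivative (\<lambda>h. ?Df (h *\<^sub>R (\<chi> k. xi k (xi_flow p s))))) (at s)"
    using has_derivative_compose[OF has_vector_derivative_xi_flow[OF assms(1), unfolded has_vector_derivative_def]
        f[unfolded frechet_derivative_works]] .
  moreover have "?Df (h *\<^sub>R (\<chi> k. xi k (xi_flow p s))) = h * deriv_along_xi f (xi_flow p s)" for h
    by (simp add: frechet_derivative_eq_sum_pd[OF f] deriv_along_xi_def sum_distrib_left mult.assoc)
  ultimately show ?thesis by (simp add: has_field_derivative_def mult_commute_abs)
qed

text \<open>The normal form of the theorem at a point with \<open>y\<^sub>2 = s\<close> and \<open>(A\<^sub>1, ..., A\<^sub>4) = a\<close>.\<close>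
definition invariant_form :: "real \<Rightarrow> real \<Rightarrow> real \<Rightarrow> real \<Rightarrow> real \<Rightarrow> (4 \<Rightarrow> real) \<Rightarrow> bool" where
  "invariant_form c1 c2 c3 b s a \<longleftrightarrow>
     a 1 = c2 * s + c3 \<and> a 2 = c2 * s^2 / 2 + c3 * s + c1 \<and> a 3 = b \<and> a 4 = a 2 + c2"

lemma invariant_form_0:
  "invariant_form c1 c2 c3 b 0 a \<longleftrightarrow> c1 = a 2 \<and> c2 = a 4 - a 2 \<and> c3 = a 1 \<and> b = a 3"
  by (auto simp: invariant_form_def)

lemma xi_system_iff_invariant_form:
  fixes a a' :: "4 \<Rightarrow> real \<Rightarrow> real"
  assumes deriv: "\<And>i s. (a i has_real_derivative a' i s) (at s)"
  shows "(\<forall>s. a' 1 s = a 4 s - a 2 s \<and> a' 2 s = a 1 s \<and> a' 3 s = 0 \<and> a' 4 s = a 1 s)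
    \<longleftrightarrow> (\<exists>c1 c2 c3 b. \<forall>s. invariant_form c1 c2 c3 b s (\<lambda>i. a i s))"
proof
  assume sys: "\<forall>s. a' 1 s = a 4 s - a 2 s \<and> a' 2 s = a 1 s \<and> a' 3 s = 0 \<and> a' 4 s = a 1 s"
  have const: "f s = f 0" if "\<And>s. (f has_real_derivative 0) (at s)" for f :: "real \<Rightarrow> real" and s
    using that DERIV_isconst_all by blast
  define c where "c = a 4 0 - a 2 0"
  have a42: "a 4 s - a 2 s = c" for s
    unfolding c_def using sys deriv by (intro const) (auto intro!: derivative_eq_intros)
  have a1: "a 1 s = c * s + a 1 0" for s
  proof -
    have "((\<lambda>s. a 1 s - c * s) has_real_derivative 0) (at s)" for s
      using sys deriv a42 by (auto intro!: derivative_eq_intros)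
    from const[OF this, of s] show ?thesis by simp
  qed
  have a2: "a 2 s = c * s^2 / 2 + a 1 0 * s + a 2 0" for s
  proof -
    have "((\<lambda>s. a 2 s - c * s^2 / 2 - a 1 0 * s) has_real_derivative 0) (at s)" for s
      using sys deriv a1[of s] by (auto intro!: derivative_eq_intros)
    from const[OF this, of s] show ?thesis by simp
  qed
  have a3: "a 3 s = a 3 0" for s
    using deriv[of 3] sys by (intro const) metis
  have "invariant_form (a 2 0) c (a 1 0) (a 3 0) s (\<lambda>i. a i s)" for s
    using a1[of s] a2[of s] a3[of s] a42[of s] by (simp add: invariant_form_def algebra_simps)
  then show "\<exists>c1 c2 c3 b. \<forall>s. invariant_form c1 c2 c3 b s (\<lambda>i. a i s)" by blast
next
  assume "\<exists>c1 c2 c3 b. \<forall>s. invariant_form c1 c2 c3 b s (\<lambda>i. a i s)"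
  then obtain c1 c2 c3 b where "\<forall>s. invariant_form c1 c2 c3 b s (\<lambda>i. a i s)" by blast
  then have poly: "a 1 = (\<lambda>s. c2 * s + c3)" "a 2 = (\<lambda>s. c2 * s^2 / 2 + c3 * s + c1)"
    "a 3 = (\<lambda>s. b)" "a 4 = (\<lambda>s. c2 * s^2 / 2 + c3 * s + c1 + c2)"
    by (auto simp: invariant_form_def fun_eq_iff)
  then have "(a 1 has_real_derivative c2) (at s)" "(a 2 has_real_derivative c2 * s + c3) (at s)"
    "(a 3 has_real_derivative 0) (at s)" "(a 4 has_real_derivative c2 * s + c3) (at s)" for s
    by (auto intro!: derivative_eq_intros)
  then have "a' 1 s = c2 \<and> a' 2 s = c2 * s + c3 \<and> a' 3 s = 0 \<and> a' 4 s = c2 * s + c3" for s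
    using deriv by (meson DERIV_unique)
  then show "\<forall>s. a' 1 s = a 4 s - a 2 s \<and> a' 2 s = a 1 s \<and> a' 3 s = 0 \<and> a' 4 s = a 1 s"
    by (simp add: poly)
qed

lemma lie_deriv_xi_zero_on_orbit_iff:
  assumes "p$1 \<noteq> 0" and "\<And>i s. A i differentiable (at (xi_flow p s))"
  shows "(\<forall>i s. lie_deriv xi A i (xi_flow p s) = 0)
    \<longleftrightarrow> (\<exists>c1 c2 c3 b. \<forall>s. invariant_form c1 c2 c3 b s (\<lambda>i. A i (xi_flow p s)))"
proof -
  let ?a' = "\<lambda>i s. deriv_along_xi (A i) (xi_flow p s)"
  have "(\<forall>i s. lie_deriv xi A i (xi_flow p s) = 0) \<longleftrightarrow>
      (\<forall>s. ?a' 1 s = A 4 (xi_flow p s) - A 2 (xi_flow p s) \<and> ?a' 2 s = A 1 (xi_flow p s) \<and>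
        ?a' 3 s = 0 \<and> ?a' 4 s = A 1 (xi_flow p s))"
    by (simp add: forall_4 lie_deriv_xi eq_diff_eq all_conj_distrib)
  also have "\<dots> \<longleftrightarrow> (\<exists>c1 c2 c3 b. \<forall>s. invariant_form c1 c2 c3 b s (\<lambda>i. A i (xi_flow p s)))"
    using assms by (intro xi_system_iff_invariant_form has_real_derivative_along_xi_flow)
  finally show ?thesis .
qed

lemma smooth_on_xi_flow_0: "smooth_on {p. 0 < p$1} (\<lambda>p. xi_flow p 0 $ j)"
proof -
  let ?S = "{p::real^3. 0 < p$1}"
  have S: "open ?S" using open_halfspace_component_gt_cart[of 0 1] by simp
  have quot: "smooth_on ?S (\<lambda>p. p$3 / p$1)"
    using smooth_on_mult[OF S smooth_on_component smooth_on_inverse_component] by (simp add: divide_inverse)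
  consider "j = 1" | "j = 2" | "j = 3" | "j = 4" using exhaust_4 by blast
  then show ?thesis
  proof cases
    case 1
    then show ?thesis by (simp add: smooth_on_const)
  next
    case 2
    then show ?thesis using quot by simp
  next
    case 3
    then show ?thesis by (simp add: smooth_on_component)
  next
    case 4
    then show ?thesis
      using smooth_on_diff[OF S smooth_on_component quot] by simp
  qed
qed

lemma invariant_form_if_lie_deriv_xi_zero:
  assumes smooth: "\<And>i. smooth_on {x. 0 < x$2 + x$4} (A i)"
    and lie: "\<And>i x. 0 < x$2 + x$4 \<Longrightarrow> lie_deriv xi A i x = 0"
  shows "\<exists>C1 C2 C3 B. smooth_on {p. 0 < p$1} C1 \<and> smooth_on {p. 0 < p$1} C2 \<and>
    smooth_on {p. 0 < p$1} C3 \<and> smooth_on {p. 0 < p$1} B \<and>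
    (\<forall>x\<in>{x. 0 < x$2 + x$4}. invariant_form (C1 (xi_invariants x)) (C2 (xi_invariants x))
       (C3 (xi_invariants x)) (B (xi_invariants x)) (xi_param x) (\<lambda>i. A i x))"
proof -
  let ?S = "{p::real^3. 0 < p$1}" and ?U = "{x::real^4. 0 < x$2 + x$4}"
  have S: "open ?S" using open_halfspace_component_gt_cart[of 0 1] by simp
  have U: "open ?U" by (intro open_Collect_less continuous_intros)
  define a0 where "a0 i = (\<lambda>p. A i (xi_flow p 0))" for i
  have smooth_a0: "smooth_on ?S (a0 i)" for i
    unfolding a0_def using xi_invariants_xi_flow(3)
    by (intro smooth_on_compose[OF S U _ smooth_on_xi_flow_0 smooth]) blast
  have orbit: "invariant_form (a0 2 p) (a0 4 p - a0 2 p) (a0 1 p) (a0 3 p) s (\<lambda>i. A i (xi_flow p s))"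
    if p: "0 < p$1" for p s
  proof -
    have "\<forall>i s. lie_deriv xi A i (xi_flow p s) = 0"
      using lie xi_invariants_xi_flow(3)[OF p] by blast
    moreover have "A i differentiable (at (xi_flow p s))" for i s
      using smooth_on_differentiable_at[OF smooth U] xi_invariants_xi_flow(3)[OF p] by blast
    ultimately obtain c1 c2 c3 b where "\<forall>s. invariant_form c1 c2 c3 b s (\<lambda>i. A i (xi_flow p s))"
      using lie_deriv_xi_zero_on_orbit_iff[of p A] p by auto
    with invariant_form_0 show ?thesis by (metis a0_def)
  qed
  have "invariant_form (a0 2 (xi_invariants x)) (a0 4 (xi_invariants x) - a0 2 (xi_invariants x))
      (a0 1 (xi_invariants x)) (a0 3 (xi_invariants x)) (xi_param x) (\<lambda>i. A i x)"
    if "0 < x$2 + x$4" for x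
    using orbit[of "xi_invariants x" "xi_param x"] that by (simp add: xi_flow_xi_invariants)
  then show ?thesis
    using smooth_a0 smooth_on_diff[OF S smooth_a0 smooth_a0] by blast
qed

lemma lie_deriv_xi_zero_if_invariant_form:
  assumes diff: "\<And>i x. 0 < x$2 + x$4 \<Longrightarrow> A i differentiable (at x)"
    and form: "\<And>x. 0 < x$2 + x$4 \<Longrightarrow> invariant_form (C1 (xi_invariants x)) (C2 (xi_invariants x))
       (C3 (xi_invariants x)) (B (xi_invariants x)) (xi_param x) (\<lambda>i. A i x)"
    and x: "0 < x$2 + x$4"
  shows "lie_deriv xi A i x = 0"
proof -
  let ?p = "xi_invariants x"
  have p: "0 < ?p$1" using x by simp
  have "\<forall>s. invariant_form (C1 ?p) (C2 ?p) (C3 ?p) (B ?p) s (\<lambda>i. A i (xi_flow ?p s))"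
    using form xi_invariants_xi_flow[OF p] by metis
  moreover have "A i differentiable (at (xi_flow ?p s))" for i s
    using diff xi_invariants_xi_flow(3)[OF p] by blast
  ultimately have "\<forall>i s. lie_deriv xi A i (xi_flow ?p s) = 0"
    using lie_deriv_xi_zero_on_orbit_iff[of ?p A] p by (metis less_irrefl)
  then show ?thesis using xi_flow_xi_invariants[OF x] by metis
qed

lemma lie_deriv_xi_zero_iff_invariant_form:
  assumes "\<And>i. smooth_on {x. 0 < x$2 + x$4} (A i)"
  shows "(\<forall>i. \<forall>x\<in>{x. 0 < x$2 + x$4}. lie_deriv xi A i x = 0) \<longleftrightarrow>
    (\<exists>C1 C2 C3 B. smooth_on {p. 0 < p$1} C1 \<and> smooth_on {p. 0 < p$1} C2 \<and>
      smooth_on {p. 0 < p$1} C3 \<and> smooth_on {p. 0 < p$1} B \<and>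
      (\<forall>x\<in>{x. 0 < x$2 + x$4}. invariant_form (C1 (xi_invariants x)) (C2 (xi_invariants x))
         (C3 (xi_invariants x)) (B (xi_invariants x)) (xi_param x) (\<lambda>i. A i x)))"
    (is "?lie \<longleftrightarrow> ?form")
proof
  assume ?lie
  with assms show ?form by (intro invariant_form_if_lie_deriv_xi_zero) auto
next
  assume ?form
  then obtain C1 C2 C3 B where form: "\<forall>x\<in>{x. 0 < x$2 + x$4}. invariant_form (C1 (xi_invariants x))
      (C2 (xi_invariants x)) (C3 (xi_invariants x)) (B (xi_invariants x)) (xi_param x) (\<lambda>i. A i x)"
    by blast
  have U: "open {x::real^4. 0 < x$2 + x$4}" by (intro open_Collect_less continuous_intros)
  have "A i differentiable (at x)" if "0 < x$2 + x$4" for i x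
    using smooth_on_differentiable_at[OF assms U] that by simp
  with form show ?lie
    using lie_deriv_xi_zero_if_invariant_form[of A C1 C2 C3 B] by auto
qed

theorem mainTheorem3:
  fixes A :: "4 \<Rightarrow> real^4 \<Rightarrow> real"
  defines "U \<equiv> {x::real^4. x$2 + x$4 > 0}"
      and "\<xi> \<equiv> (\<lambda>k x. e12 k x - e14 k x)"
  assumes smoothA: "\<forall>i. smooth_on U (A i)"
  shows "(\<forall>i. \<forall>x\<in>U. lie_deriv \<xi> A i x = 0) \<longleftrightarrow>
    (\<exists>C1 C2 C3 B :: real^3 \<Rightarrow> real.
       smooth_on {y. y$1 > 0} C1 \<and> smooth_on {y. y$1 > 0} C2 \<and>
       smooth_on {y. y$1 > 0} C3 \<and> smooth_on {y. y$1 > 0} B \<and>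
       (\<forall>x\<in>U.
          (let t1 = x$2 + x$4; t2 = - x$1 / t1; t3 = x$3;
               t4 = (x$1)^2 / 2 + x$2 * t1;
               p = vector [t1, t3, t4] :: real^3
           in A 1 x = C2 p * t2 + C3 p \<and>
              A 2 x = C2 p * t2^2 / 2 + C3 p * t2 + C1 p \<and>
              A 3 x = B p \<and>
              A 4 x = A 2 x + C2 p)))"
proof -
  have "\<xi> = xi" by (simp add: \<xi>_def xi_def fun_eq_iff)
  moreover have "\<And>i. smooth_on {x. 0 < x$2 + x$4} (A i)" using smoothA by (simp add: U_def)
  ultimately show ?thesis
    using lie_deriv_xi_zero_iff_invariant_form[of A] unfolding U_def
    by (simp add: Let_def invariant_form_def xi_invariants_def xi_param_def)
qed

end
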